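(* Let $(\Vdash_{\mathcal M},\Vdash)$ be a monadic realizability relation for a syntactic monad $\mathcal M=(\mathsf T,\mathsf{unit},\mathsf{star},\mathsf{merge})$. Let $A_1,\dots,A_k,B$ be closed formulas and $r:|A_1|\to\dots\to|A_k|\to\|B\|$ a term such that $r\,p_1\cdots p_k\Vdash_{\mathcal M}B$ for all $p_1:|A_1|,\dots,p_k:|A_k|$ with $p_i\Vdash A_i$. Then $\mathsf{star}^k\,r\,q_1\cdots q_k\Vdash_{\mathcal M}B$ for all $q_1:\|A_1\|,\dots,q_k:\|A_k\|$ with $q_i\Vdash_{\mathcal M}A_i$.
   Context: System $T'$: simply typed $\lambda$-calculus with types built from atomic types (including $\mathsf{Unit},\mathsf{Nat}$) by $\to,\times,+$, constants $\star$, pairing $\langle\cdot,\cdot\rangle$, projections $\pi_1,\pi_2$, injections $\mathrm{inl},\mathrm{inr}$, $\mathrm{case}$, $0$, $\mathrm{succ}$ and a bounded course-of-values recursor, with the usual $\beta$, projection and case reductions; $t\leadsto u$ means $t$ reduces to $u$. $\bar n$ denotes the numeral for $n$. Syntactic monad: $\mathsf T$ a map on types, closed terms $\mathsf{unit}_X:X\to\mathsf TX$, $\mathsf{star}_{X,Y}:(X\to\mathsf TY)\to\mathsf TX\to\mathsf TY$, $\mathsf{merge}_{X,Y}:\mathsf TX\to\mathsf TY\to\mathsf T(X\times Y)$ with $\mathsf{star}\,\mathsf{unit}\,a\leadsto a$, $\mathsf{star}\,f(\mathsf{unit}\,x)\leadsto fx$, $\mathsf{merge}(\mathsf{unit}\,x)(\mathsf{unit}\,y)\leadsto\mathsf{unit}\langle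 x,y\rangle$. $\mathsf{star}^0=\lambda f.f$, $\mathsf{star}^1=\mathsf{star}$, $\mathsf{star}^{k+2}=\lambda f\lambda x\lambda y.\,\mathsf{star}^{k+1}(\lambda z.f(\pi_1z)(\pi_2z))(\mathsf{merge}\,x\,y)$. Formulas are first-order arithmetic formulas with decidable atomic predicates ($\bot$ atomic, never true). Types: $\|A\|=\mathsf T|A|$, $|P|=\mathsf{Unit}$ ($P$ atomic), $|B\wedge C|=|B|\times|C|$, $|B\vee C|=|B|+|C|$, $|\exists xB|=\mathsf{Nat}\times|B|$, $|B\to C|=|B|\to\|C\|$, $|\forall xB|=\mathsf{Nat}\to\|B\|$. A monadic realizability relation is a pair: $\Vdash_{\mathcal M}$ between terms of type $\|A\|$ and closed $A$, and $\Vdash$ between terms of type $|A|$ and closed $A$, with: $r\Vdash P$ iff $r\leadsto\star$ and $P$ true; $r\Vdash B\wedge C$ iff $\pi_1r\Vdash B$ and $\pi_2r\Vdash C$; $r\Vdash B\vee C$ iff $r\leadsto\mathrm{inl}\,a$ with $a\Vdash B$ or $r\leadsto\mathrm{inr}\,b$ with $b\Vdash C$; $r\Vdash B\to C$ iff $rp\Vdash_{\mathcal M}C$ for all $p\Vdash B$; $r\Vdash\forall xB$ iff $r\bar n\Vdash_{\mathcal M}B[x:=\bar n]$ for all $n$; $r\Vdash\exists xB$ iff $\pi_2r\Vdash B[x:=\pi_1r]$; and (MR1) $r\Vdash A\Rightarrow\mathsf{unit}\,r\Vdash_{\mathcal M}A$; (MR2) $r\Vdash B\to C\Rightarrow\mathsf{star}\,r\,p\Vdash_{\mathcal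 M}C$ for all $p\Vdash_{\mathcal M}B$; (MR3) $p\Vdash_{\mathcal M}B$, $q\Vdash_{\mathcal M}C\Rightarrow\mathsf{merge}\,p\,q\Vdash_{\mathcal M}B\wedge C$. *)

theory Defs
  imports Main
begin

section \<open>The calculus T' (de Bruijn syntax)\<close>

datatype ty = TAtom nat | TUnit | TNat | TArr ty ty | TProd ty ty | TSum ty ty

text \<open>Bound variables are de Bruijn indices.  Extra constants of type 'c
  (e.g. the bounded course-of-values recursor) are allowed; their types are given
  by a typing function and their reduction rules by an extra root contraction
  relation delta.  Inl U a : X + U, Inr X b : X + U.  In Case t s u the branches
  s and u bind variable 0.\<close>
datatype 'c trm =
    Var nat
  | Lam ty "'c trm"
  | App "'c trm" "'c trm"
  | UnitC
  | Pair "'c trm" "'c trm"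
  | Fst "'c trm"
  | Snd "'c trm"
  | Inl ty "'c trm"
  | Inr ty "'c trm"
  | Case "'c trm" "'c trm" "'c trm"
  | Zero
  | Succ "'c trm"
  | Const 'c

primrec lift :: "nat \<Rightarrow> 'c trm \<Rightarrow> 'c trm" where
  "lift k (Var i) = (if i < k then Var i else Var (Suc i))"
| "lift k (Lam T b) = Lam T (lift (Suc k) b)"
| "lift k (App s t) = App (lift k s) (lift k t)"
| "lift k UnitC = UnitC"
| "lift k (Pair s t) = Pair (lift k s) (lift k t)"
| "lift k (Fst t) = Fst (lift k t)"
| "lift k (Snd t) = Snd (lift k t)"
| "lift k (Inl T t) = Inl T (lift k t)"
| "lift k (Inr T t) = Inr T (lift k t)"
| "lift k (Case t s u) = Case (lift k t) (lift (Suc k) s) (lift (Suc k) u)"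
| "lift k Zero = Zero"
| "lift k (Succ t) = Succ (lift k t)"
| "lift k (Const c) = Const c"

text \<open>subst t k s: substitute s for index k in t (and decrement larger indices).\<close>
primrec subst :: "'c trm \<Rightarrow> nat \<Rightarrow> 'c trm \<Rightarrow> 'c trm" where
  "subst (Var i) k s = (if i < k then Var i else if i = k then s else Var (i - 1))"
| "subst (Lam T b) k s = Lam T (subst b (Suc k) (lift 0 s))"
| "subst (App t u) k s = App (subst t k s) (subst u k s)"
| "subst UnitC k s = UnitC"
| "subst (Pair t u) k s = Pair (subst t k s) (subst u k s)"
| "subst (Fst t) k s = Fst (subst t k s)"
| "subst (Snd t) k s = Snd (subst t k s)"
| "subst (Inl T t) k s = Inl T (subst t k s)"
| "subst (Inr T t) k s = Inr T (subst t k s)"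
| "subst (Case t u v) k s =
     Case (subst t k s) (subst u (Suc k) (lift 0 s)) (subst v (Suc k) (lift 0 s))"
| "subst Zero k s = Zero"
| "subst (Succ t) k s = Succ (subst t k s)"
| "subst (Const c) k s = Const c"

inductive typing :: "('c \<Rightarrow> ty) \<Rightarrow> ty list \<Rightarrow> 'c trm \<Rightarrow> ty \<Rightarrow> bool"
  for ctyp :: "'c \<Rightarrow> ty" where
  T_Var: "i < length \<Gamma> \<Longrightarrow> \<Gamma> ! i = T \<Longrightarrow> typing ctyp \<Gamma> (Var i) T"
| T_Lam: "typing ctyp (T # \<Gamma>) b U \<Longrightarrow> typing ctyp \<Gamma> (Lam T b) (TArr T U)"
| T_App: "typing ctyp \<Gamma> s (TArr T U) \<Longrightarrow> typing ctyp \<Gamma> t T \<Longrightarrow> typing ctyp \<Gamma> (App s t) U"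
| T_Unit: "typing ctyp \<Gamma> UnitC TUnit"
| T_Pair: "typing ctyp \<Gamma> s T \<Longrightarrow> typing ctyp \<Gamma> t U \<Longrightarrow> typing ctyp \<Gamma> (Pair s t) (TProd T U)"
| T_Fst: "typing ctyp \<Gamma> t (TProd T U) \<Longrightarrow> typing ctyp \<Gamma> (Fst t) T"
| T_Snd: "typing ctyp \<Gamma> t (TProd T U) \<Longrightarrow> typing ctyp \<Gamma> (Snd t) U"
| T_Inl: "typing ctyp \<Gamma> t T \<Longrightarrow> typing ctyp \<Gamma> (Inl U t) (TSum T U)"
| T_Inr: "typing ctyp \<Gamma> t U \<Longrightarrow> typing ctyp \<Gamma> (Inr T t) (TSum T U)"
| T_Case: "typing ctyp \<Gamma> t (TSum T U) \<Longrightarrow> typing ctyp (T # \<Gamma>) s V \<Longrightarrow>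
           typing ctyp (U # \<Gamma>) u V \<Longrightarrow> typing ctyp \<Gamma> (Case t s u) V"
| T_Zero: "typing ctyp \<Gamma> Zero TNat"
| T_Succ: "typing ctyp \<Gamma> t TNat \<Longrightarrow> typing ctyp \<Gamma> (Succ t) TNat"
| T_Const: "typing ctyp \<Gamma> (Const c) (ctyp c)"

inductive red :: "('c trm \<Rightarrow> 'c trm \<Rightarrow> bool) \<Rightarrow> 'c trm \<Rightarrow> 'c trm \<Rightarrow> bool"
  for delta :: "'c trm \<Rightarrow> 'c trm \<Rightarrow> bool" where
  R_beta: "red delta (App (Lam T b) a) (subst b 0 a)"
| R_fst: "red delta (Fst (Pair a b)) a"
| R_snd: "red delta (Snd (Pair a b)) b"
| R_inl: "red delta (Case (Inl U a) s u) (subst s 0 a)"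
| R_inr: "red delta (Case (Inr T a) s u) (subst u 0 a)"
| R_delta: "delta t t' \<Longrightarrow> red delta t t'"
| R_Lam: "red delta b b' \<Longrightarrow> red delta (Lam T b) (Lam T b')"
| R_App1: "red delta s s' \<Longrightarrow> red delta (App s t) (App s' t)"
| R_App2: "red delta t t' \<Longrightarrow> red delta (App s t) (App s t')"
| R_Pair1: "red delta s s' \<Longrightarrow> red delta (Pair s t) (Pair s' t)"
| R_Pair2: "red delta t t' \<Longrightarrow> red delta (Pair s t) (Pair s t')"
| R_Fst: "red delta t t' \<Longrightarrow> red delta (Fst t) (Fst t')"
| R_Snd: "red delta t t' \<Longrightarrow> red delta (Snd t) (Snd t')"
| R_Inl: "red delta t t' \<Longrightarrow> red delta (Inl U t) (Inl U t')"
| R_Inr: "red delta t t' \<Longrightarrow> red delta (Inr T t) (Inr T t')"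
| R_Case1: "red delta t t' \<Longrightarrow> red delta (Case t s u) (Case t' s u)"
| R_Case2: "red delta s s' \<Longrightarrow> red delta (Case t s u) (Case t s' u)"
| R_Case3: "red delta u u' \<Longrightarrow> red delta (Case t s u) (Case t s u')"
| R_Succ: "red delta t t' \<Longrightarrow> red delta (Succ t) (Succ t')"

definition reds :: "('c trm \<Rightarrow> 'c trm \<Rightarrow> bool) \<Rightarrow> 'c trm \<Rightarrow> 'c trm \<Rightarrow> bool" where
  "reds delta = (red delta)\<^sup>*\<^sup>*"

definition conv :: "('c trm \<Rightarrow> 'c trm \<Rightarrow> bool) \<Rightarrow> 'c trm \<Rightarrow> 'c trm \<Rightarrow> bool" where
  "conv delta = (\<lambda>t u. red delta t u \<or> red delta u t)\<^sup>*\<^sup>*"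

definition num :: "nat \<Rightarrow> 'c trm" where
  "num n = (Succ ^^ n) Zero"

fun arrows :: "ty list \<Rightarrow> ty \<Rightarrow> ty" where
  "arrows [] Y = Y"
| "arrows (X # Xs) Y = TArr X (arrows Xs Y)"

fun apps :: "'c trm \<Rightarrow> 'c trm list \<Rightarrow> 'c trm" where
  "apps t [] = t"
| "apps t (s # ss) = apps (App t s) ss"

section \<open>Syntactic monads\<close>

definition syn_monad ::
  "('c \<Rightarrow> ty) \<Rightarrow> ('c trm \<Rightarrow> 'c trm \<Rightarrow> bool) \<Rightarrow> (ty \<Rightarrow> ty) \<Rightarrow> (ty \<Rightarrow> 'c trm)
   \<Rightarrow> (ty \<Rightarrow> ty \<Rightarrow> 'c trm) \<Rightarrow> (ty \<Rightarrow> ty \<Rightarrow> 'c trm) \<Rightarrow> bool" where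
  "syn_monad ctyp delta Tm unitT starT mergeT \<longleftrightarrow>
     (\<forall>X. typing ctyp [] (unitT X) (TArr X (Tm X))) \<and>
     (\<forall>X Y. typing ctyp [] (starT X Y) (TArr (TArr X (Tm Y)) (TArr (Tm X) (Tm Y)))) \<and>
     (\<forall>X Y. typing ctyp [] (mergeT X Y) (TArr (Tm X) (TArr (Tm Y) (Tm (TProd X Y))))) \<and>
     (\<forall>\<Gamma> X a. typing ctyp \<Gamma> a (Tm X) \<longrightarrow>
        reds delta (App (App (starT X X) (unitT X)) a) a) \<and>
     (\<forall>\<Gamma> X Y f x. typing ctyp \<Gamma> f (TArr X (Tm Y)) \<longrightarrow> typing ctyp \<Gamma> x X \<longrightarrow>
        reds delta (App (App (starT X Y) f) (App (unitT X) x)) (App f x)) \<and>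
     (\<forall>\<Gamma> X Y x y. typing ctyp \<Gamma> x X \<longrightarrow> typing ctyp \<Gamma> y Y \<longrightarrow>
        reds delta (App (App (mergeT X Y) (App (unitT X) x)) (App (unitT Y) y))
                   (App (unitT (TProd X Y)) (Pair x y)))"

text \<open>star^k, at the types X1,...,Xk (list Xs) and result type Y:
  star^0 = \<lambda>f. f, star^1 = star, and
  star^(k+2) = \<lambda>f x y. star^(k+1) (\<lambda>z. f (\<pi>1 z) (\<pi>2 z)) (merge x y).\<close>
fun starK :: "(ty \<Rightarrow> ty) \<Rightarrow> (ty \<Rightarrow> ty \<Rightarrow> 'c trm) \<Rightarrow> (ty \<Rightarrow> ty \<Rightarrow> 'c trm)
              \<Rightarrow> ty list \<Rightarrow> ty \<Rightarrow> 'c trm" where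
  "starK Tm starT mergeT [] Y = Lam (Tm Y) (Var 0)"
| "starK Tm starT mergeT [X] Y = starT X Y"
| "starK Tm starT mergeT (X1 # X2 # Xs) Y =
     Lam (arrows (X1 # X2 # Xs) (Tm Y)) (Lam (Tm X1) (Lam (Tm X2)
       (App (App (starK Tm starT mergeT (TProd X1 X2 # Xs) Y)
                 (Lam (TProd X1 X2) (App (App (Var 3) (Fst (Var 0))) (Snd (Var 0)))))
            (App (App (mergeT X1 X2) (Var 1)) (Var 0)))))"

section \<open>First-order arithmetic formulas\<close>

datatype atm = AVar nat | AZero | ASuc atm | AAdd atm atm | AMul atm atm

text \<open>Atomic predicates are symbols of type 'p, interpreted by a (decidable)
  predicate on numbers; FBot is the atomic formula that is never true.\<close>
datatype 'p fm =
    FAtom 'p "atm list"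
  | FBot
  | FAnd "'p fm" "'p fm"
  | FOr "'p fm" "'p fm"
  | FImp "'p fm" "'p fm"
  | FAll nat "'p fm"
  | FEx nat "'p fm"

primrec avars :: "atm \<Rightarrow> nat set" where
  "avars (AVar x) = {x}"
| "avars AZero = {}"
| "avars (ASuc t) = avars t"
| "avars (AAdd s t) = avars s \<union> avars t"
| "avars (AMul s t) = avars s \<union> avars t"

primrec fv :: "'p fm \<Rightarrow> nat set" where
  "fv (FAtom p ts) = (\<Union>t\<in>set ts. avars t)"
| "fv FBot = {}"
| "fv (FAnd A B) = fv A \<union> fv B"
| "fv (FOr A B) = fv A \<union> fv B"
| "fv (FImp A B) = fv A \<union> fv B"
| "fv (FAll x A) = fv A - {x}"
| "fv (FEx x A) = fv A - {x}"

definition closed_fm :: "'p fm \<Rightarrow> bool" where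
  "closed_fm A \<longleftrightarrow> fv A = {}"

primrec anum :: "nat \<Rightarrow> atm" where
  "anum 0 = AZero"
| "anum (Suc n) = ASuc (anum n)"

primrec asubst :: "nat \<Rightarrow> nat \<Rightarrow> atm \<Rightarrow> atm" where
  "asubst x n (AVar y) = (if y = x then anum n else AVar y)"
| "asubst x n AZero = AZero"
| "asubst x n (ASuc t) = ASuc (asubst x n t)"
| "asubst x n (AAdd s t) = AAdd (asubst x n s) (asubst x n t)"
| "asubst x n (AMul s t) = AMul (asubst x n s) (asubst x n t)"

text \<open>fsubst x n A = A[x := numeral n] (substituting a closed term, no capture).\<close>
primrec fsubst :: "nat \<Rightarrow> nat \<Rightarrow> 'p fm \<Rightarrow> 'p fm" where
  "fsubst x n (FAtom p ts) = FAtom p (map (asubst x n) ts)"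
| "fsubst x n FBot = FBot"
| "fsubst x n (FAnd A B) = FAnd (fsubst x n A) (fsubst x n B)"
| "fsubst x n (FOr A B) = FOr (fsubst x n A) (fsubst x n B)"
| "fsubst x n (FImp A B) = FImp (fsubst x n A) (fsubst x n B)"
| "fsubst x n (FAll y A) = (if y = x then FAll y A else FAll y (fsubst x n A))"
| "fsubst x n (FEx y A) = (if y = x then FEx y A else FEx y (fsubst x n A))"

primrec aval :: "atm \<Rightarrow> nat" where
  "aval (AVar x) = 0"
| "aval AZero = 0"
| "aval (ASuc t) = Suc (aval t)"
| "aval (AAdd s t) = aval s + aval t"
| "aval (AMul s t) = aval s * aval t"

text \<open>|A| (tyA Tm A); ||A|| = Tm |A|.\<close>
primrec tyA :: "(ty \<Rightarrow> ty) \<Rightarrow> 'p fm \<Rightarrow> ty" where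
  "tyA Tm (FAtom p ts) = TUnit"
| "tyA Tm FBot = TUnit"
| "tyA Tm (FAnd B C) = TProd (tyA Tm B) (tyA Tm C)"
| "tyA Tm (FOr B C) = TSum (tyA Tm B) (tyA Tm C)"
| "tyA Tm (FEx x B) = TProd TNat (tyA Tm B)"
| "tyA Tm (FImp B C) = TArr (tyA Tm B) (Tm (tyA Tm C))"
| "tyA Tm (FAll x B) = TArr TNat (Tm (tyA Tm B))"

section \<open>Monadic realizability relations\<close>

text \<open>realM r A : r \<Vdash>_M A  (r closed of type ||A||, A closed);
  real r A : r \<Vdash> A  (r closed of type |A|, A closed).
  Terms are identified up to convertibility: both relations are invariant
  under conversion (among closed terms of the appropriate type).\<close>
definition monadic_real ::
  "('c \<Rightarrow> ty) \<Rightarrow> ('c trm \<Rightarrow> 'c trm \<Rightarrow> bool) \<Rightarrow> ('p \<Rightarrow> nat list \<Rightarrow> bool) \<Rightarrow> (ty \<Rightarrow> ty)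
   \<Rightarrow> (ty \<Rightarrow> 'c trm) \<Rightarrow> (ty \<Rightarrow> ty \<Rightarrow> 'c trm) \<Rightarrow> (ty \<Rightarrow> ty \<Rightarrow> 'c trm)
   \<Rightarrow> ('c trm \<Rightarrow> 'p fm \<Rightarrow> bool) \<Rightarrow> ('c trm \<Rightarrow> 'p fm \<Rightarrow> bool) \<Rightarrow> bool" where
  "monadic_real ctyp delta interp Tm unitT starT mergeT realM real \<longleftrightarrow>
     \<comment> \<open>the relations are between closed terms of the right type and closed formulas\<close>
     (\<forall>r A. real r A \<longrightarrow> closed_fm A \<and> typing ctyp [] r (tyA Tm A)) \<and>
     (\<forall>r A. realM r A \<longrightarrow> closed_fm A \<and> typing ctyp [] r (Tm (tyA Tm A))) \<and>
     \<comment> \<open>terms are considered up to conversion\<close>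
     (\<forall>r r' A. real r A \<longrightarrow> conv delta r r' \<longrightarrow> typing ctyp [] r' (tyA Tm A) \<longrightarrow> real r' A) \<and>
     (\<forall>r r' A. realM r A \<longrightarrow> conv delta r r' \<longrightarrow> typing ctyp [] r' (Tm (tyA Tm A)) \<longrightarrow> realM r' A) \<and>
     \<comment> \<open>defining clauses for \<Vdash>, for closed A and closed r of type |A|\<close>
     (\<forall>r A. closed_fm A \<longrightarrow> typing ctyp [] r (tyA Tm A) \<longrightarrow>
        (real r A \<longleftrightarrow>
          (case A of
             FAtom p ts \<Rightarrow> reds delta r UnitC \<and> interp p (map aval ts)
           | FBot \<Rightarrow> reds delta r UnitC \<and> False
           | FAnd B C \<Rightarrow> real (Fst r) B \<and> real (Snd r) C
           | FOr B C \<Rightarrow> (\<exists>a. reds delta r (Inl (tyA Tm C) a) \<and> real a B) \<or>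
                        (\<exists>b. reds delta r (Inr (tyA Tm B) b) \<and> real b C)
           | FImp B C \<Rightarrow> (\<forall>p. real p B \<longrightarrow> realM (App r p) C)
           | FAll x B \<Rightarrow> (\<forall>n. realM (App r (num n)) (fsubst x n B))
           | FEx x B \<Rightarrow> (\<exists>n. reds delta (Fst r) (num n) \<and> real (Snd r) (fsubst x n B))))) \<and>
     \<comment> \<open>(MR1)\<close>
     (\<forall>r A. real r A \<longrightarrow> realM (App (unitT (tyA Tm A)) r) A) \<and>
     \<comment> \<open>(MR2)\<close>
     (\<forall>r p B C. real r (FImp B C) \<longrightarrow> realM p B \<longrightarrow>
        realM (App (App (starT (tyA Tm B) (tyA Tm C)) r) p) C) \<and>
     \<comment> \<open>(MR3)\<close>
     (\<forall>p q B C. realM p B \<longrightarrow> realM q C \<longrightarrow>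
        realM (App (App (mergeT (tyA Tm B) (tyA Tm C)) p) q) (FAnd B C))"

end

theory Submission
  imports Defs
begin

text \<open>For k = 0, star^0 r just beta-reduces to r; for k = 1 the hypothesis
  on r says r \<Vdash> A1 \<rightarrow> B, and (MR2) applies. For k \<ge> 2, star^k r q1 q2 \<dots> reduces to
  star^(k-1) r' (merge q1 q2) \<dots>, where r' = \<lambda>z. r (\<pi>1 z) (\<pi>2 z) realizes the curried
  statement for (A1 \<and> A2), A3, \<dots>, B and merge q1 q2 \<Vdash>_M A1 \<and> A2 by (MR3). The induction
  hypothesis applies to this shorter list, and realizability transfers back along the
  reduction because the relations are closed under conversion.\<close>

lemma typing_append_context:
  "typing ctyp \<Gamma> t T \<Longrightarrow> typing ctyp (\<Gamma> @ \<Delta>) t T"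
proof (induction arbitrary: \<Delta> rule: typing.induct)
  case (T_Var i \<Gamma> T) then show ?case by (auto intro: typing.T_Var simp: nth_append)
next
  case (T_App \<Gamma> s T U t) then show ?case by (auto intro: typing.T_App)
next
  case (T_Fst \<Gamma> t T U) then show ?case by (auto intro: typing.T_Fst)
next
  case (T_Snd \<Gamma> t T U) then show ?case by (auto intro: typing.T_Snd)
next
  case (T_Case \<Gamma> t T U s V u) then show ?case by (auto intro: typing.T_Case)
qed (auto intro: typing.intros)

lemma typing_closed_any_context:
  "typing ctyp [] t T \<Longrightarrow> typing ctyp \<Gamma> t T"
  using typing_append_context[of ctyp "[]" t T \<Gamma>] by simp

lemma typing_lift_subst_above:
  "typing ctyp \<Gamma> t T \<Longrightarrow> length \<Gamma> \<le> k \<Longrightarrow> lift k t = t \<and> subst t k s = t"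
  by (induction arbitrary: k s rule: typing.induct) auto

lemma typing_closed_lift_subst:
  assumes "typing ctyp [] t T"
  shows "lift k t = t" "subst t k s = t"
  using typing_lift_subst_above[OF assms] by auto

lemma typing_apps:
  "typing ctyp \<Gamma> f (arrows Ts U) \<Longrightarrow> list_all2 (typing ctyp \<Gamma>) ps Ts \<Longrightarrow>
   typing ctyp \<Gamma> (apps f ps) U"
proof (induction ps arbitrary: f Ts)
  case (Cons p ps)
  then obtain T Ts' where "Ts = T # Ts'" by (cases Ts) auto
  with Cons show ?case by (auto intro: typing.T_App)
qed simp

lemma red_apps: "red delta s s' \<Longrightarrow> red delta (apps s ps) (apps s' ps)"
  by (induction ps arbitrary: s s') (auto intro: red.R_App1)

lemma red_apps_beta:
  "b' = subst b 0 a \<Longrightarrow> red delta (apps (App (Lam T b) a) ps) (apps b' ps)"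
  using red_apps[OF red.R_beta] by simp

lemma reds_imp_conv: "reds delta t u \<Longrightarrow> conv delta u t"
  unfolding reds_def conv_def
proof (induction rule: rtranclp_induct)
  case (step y z)
  then show ?case by (blast intro: converse_rtranclp_into_rtranclp)
qed simp

lemma typing_starK:
  "syn_monad ctyp delta Tm unitT starT mergeT \<Longrightarrow>
   typing ctyp [] (starK Tm starT mergeT Xs Y) (TArr (arrows Xs (Tm Y)) (arrows (map Tm Xs) (Tm Y)))"
proof (induction Tm starT mergeT Xs Y rule: starK.induct)
  case (1 Tm starT mergeT Y)
  show ?case using typing.T_Lam[OF typing.T_Var[of 0 "[Tm Y]" "Tm Y"]] by simp
next
  case (2 Tm starT mergeT X Y)
  then show ?case by (simp add: syn_monad_def)
next
  case (3 Tm starT mergeT X1 X2 Xs Y)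
  let ?\<Gamma> = "[Tm X2, Tm X1, arrows (X1 # X2 # Xs) (Tm Y)]"
  have f: "typing ctyp (TProd X1 X2 # ?\<Gamma>) (Var 3) (TArr X1 (TArr X2 (arrows Xs (Tm Y))))"
    and z: "typing ctyp (TProd X1 X2 # ?\<Gamma>) (Var 0) (TProd X1 X2)"
    and q1: "typing ctyp ?\<Gamma> (Var 1) (Tm X1)"
    and q2: "typing ctyp ?\<Gamma> (Var 0) (Tm X2)"
    by (simp_all add: typing.T_Var)
  have "typing ctyp [] (mergeT X1 X2) (TArr (Tm X1) (TArr (Tm X2) (Tm (TProd X1 X2))))"
    using "3.prems" by (simp add: syn_monad_def)
  note M = typing_closed_any_context[OF this, of ?\<Gamma>]
  have K: "typing ctyp ?\<Gamma> (starK Tm starT mergeT (TProd X1 X2 # Xs) Y)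
     (TArr (TArr (TProd X1 X2) (arrows Xs (Tm Y))) (TArr (Tm (TProd X1 X2)) (arrows (map Tm Xs) (Tm Y))))"
    using typing_closed_any_context[OF "3.IH"[OF "3.prems"]] by simp
  note uncurried = typing.T_Lam[OF typing.T_App[OF typing.T_App[OF f typing.T_Fst[OF z]] typing.T_Snd[OF z]]]
  note merged = typing.T_App[OF typing.T_App[OF M q1] q2]
  show ?case
    using typing.T_Lam[OF typing.T_Lam[OF typing.T_Lam[OF typing.T_App[OF typing.T_App[OF K uncurried] merged]]]]
    by simp
qed

definition uncurry_pair :: "ty \<Rightarrow> ty \<Rightarrow> 'c trm \<Rightarrow> 'c trm" where
  "uncurry_pair X1 X2 f = Lam (TProd X1 X2) (App (App f (Fst (Var 0))) (Snd (Var 0)))"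

lemma typing_uncurry_pair:
  assumes "typing ctyp [] f (TArr X1 (TArr X2 T))"
  shows "typing ctyp [] (uncurry_pair X1 X2 f) (TArr (TProd X1 X2) T)"
proof -
  have z: "typing ctyp [TProd X1 X2] (Var 0) (TProd X1 X2)"
    by (auto intro: typing.T_Var)
  show ?thesis
    unfolding uncurry_pair_def
    using typing_closed_any_context[OF assms] typing.T_Fst[OF z] typing.T_Snd[OF z]
    by (blast intro: typing.T_App typing.T_Lam)
qed

lemma red_uncurry_pair:
  assumes "typing ctyp [] f F"
  shows "red delta (App (uncurry_pair X1 X2 f) p) (App (App f (Fst p)) (Snd p))"
  using red.R_beta[of delta _ "App (App f (Fst (Var 0))) (Snd (Var 0))" p]
  by (simp add: uncurry_pair_def typing_closed_lift_subst[OF assms])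

lemma reds_starK_Cons_Cons:
  assumes f: "typing ctyp [] f F" and q1: "typing ctyp [] q1 Q1" and q2: "typing ctyp [] q2 Q2"
    and M: "typing ctyp [] (mergeT X1 X2) TM"
    and K: "typing ctyp [] (starK Tm starT mergeT (TProd X1 X2 # Xs) Y) TK"
  shows "reds delta (apps (starK Tm starT mergeT (X1 # X2 # Xs) Y) (f # q1 # q2 # qs))
           (apps (starK Tm starT mergeT (TProd X1 X2 # Xs) Y)
              (uncurry_pair X1 X2 f # App (App (mergeT X1 X2) q1) q2 # qs))"
proof -
  let ?K = "starK Tm starT mergeT (TProd X1 X2 # Xs) Y" and ?M = "mergeT X1 X2"
  note closed = typing_closed_lift_subst[OF f] typing_closed_lift_subst[OF q1]
    typing_closed_lift_subst[OF q2] typing_closed_lift_subst[OF M] typing_closed_lift_subst[OF K]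
  let ?L1 = "Lam (Tm X1) (Lam (Tm X2) (App (App ?K (uncurry_pair X1 X2 f)) (App (App ?M (Var 1)) (Var 0))))"
  let ?L2 = "Lam (Tm X2) (App (App ?K (uncurry_pair X1 X2 f)) (App (App ?M q1) (Var 0)))"
  have "red delta (apps (App (starK Tm starT mergeT (X1 # X2 # Xs) Y) f) (q1 # q2 # qs))
          (apps ?L1 (q1 # q2 # qs))"
    unfolding starK.simps(3) by (rule red_apps_beta) (simp add: closed uncurry_pair_def)
  moreover have "red delta (apps (App ?L1 q1) (q2 # qs)) (apps ?L2 (q2 # qs))"
    by (rule red_apps_beta) (simp add: closed uncurry_pair_def)
  moreover have "red delta (apps (App ?L2 q2) qs)
      (apps ?K (uncurry_pair X1 X2 f # App (App ?M q1) q2 # qs))"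
    by (simp only: apps.simps) (rule red_apps_beta, simp add: closed uncurry_pair_def)
  ultimately show ?thesis
    unfolding reds_def by (simp add: converse_rtranclp_into_rtranclp)
qed

locale monadic_realizability =
  fixes ctyp :: "'c \<Rightarrow> ty" and delta :: "'c trm \<Rightarrow> 'c trm \<Rightarrow> bool"
    and interp :: "'p \<Rightarrow> nat list \<Rightarrow> bool" and Tm :: "ty \<Rightarrow> ty"
    and unitT :: "ty \<Rightarrow> 'c trm" and starT mergeT :: "ty \<Rightarrow> ty \<Rightarrow> 'c trm"
    and realM real :: "'c trm \<Rightarrow> 'p fm \<Rightarrow> bool"
  assumes monad: "syn_monad ctyp delta Tm unitT starT mergeT"
    and rel: "monadic_real ctyp delta interp Tm unitT starT mergeT realM real"
begin

lemma typing_mergeT: "typing ctyp [] (mergeT X Y) (TArr (Tm X) (TArr (Tm Y) (Tm (TProd X Y))))"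
  using monad unfolding syn_monad_def by blast

lemma real_closed_fm: "real r A \<Longrightarrow> closed_fm A"
  using rel unfolding monadic_real_def by (elim conjE) blast

lemma real_typing: "real r A \<Longrightarrow> typing ctyp [] r (tyA Tm A)"
  using rel unfolding monadic_real_def by (elim conjE) blast

lemma realM_closed_fm: "realM r A \<Longrightarrow> closed_fm A"
  using rel unfolding monadic_real_def by (elim conjE) blast

lemma realM_typing: "realM r A \<Longrightarrow> typing ctyp [] r (Tm (tyA Tm A))"
  using rel unfolding monadic_real_def by (elim conjE) blast

lemma realM_reds_backward:
  assumes "realM t A" "reds delta s t" "typing ctyp [] s (Tm (tyA Tm A))"
  shows "realM s A"
  using rel reds_imp_conv[OF assms(2)] assms(1,3) unfolding monadic_real_def by (elim conjE) blast

lemma real_iff: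
  "closed_fm A \<Longrightarrow> typing ctyp [] r (tyA Tm A) \<Longrightarrow> real r A \<longleftrightarrow>
     (case A of
        FAtom p ts \<Rightarrow> reds delta r UnitC \<and> interp p (map aval ts)
      | FBot \<Rightarrow> reds delta r UnitC \<and> False
      | FAnd B C \<Rightarrow> real (Fst r) B \<and> real (Snd r) C
      | FOr B C \<Rightarrow> (\<exists>a. reds delta r (Inl (tyA Tm C) a) \<and> real a B) \<or>
                   (\<exists>b. reds delta r (Inr (tyA Tm B) b) \<and> real b C)
      | FImp B C \<Rightarrow> (\<forall>p. real p B \<longrightarrow> realM (App r p) C)
      | FAll x B \<Rightarrow> (\<forall>n. realM (App r (num n)) (fsubst x n B))
      | FEx x B \<Rightarrow> (\<exists>n. reds delta (Fst r) (num n) \<and> real (Snd r) (fsubst x n B)))"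
  using rel unfolding monadic_real_def by (elim conjE) blast

lemma real_FAndD: "real p (FAnd A1 A2) \<Longrightarrow> real (Fst p) A1 \<and> real (Snd p) A2"
  using real_iff[OF real_closed_fm real_typing] by fastforce

lemma real_FImpI:
  assumes "closed_fm A" "closed_fm C" "typing ctyp [] r (TArr (tyA Tm A) (Tm (tyA Tm C)))"
    and "\<And>p. real p A \<Longrightarrow> realM (App r p) C"
  shows "real r (FImp A C)"
  using real_iff[of "FImp A C" r] assms by (simp add: closed_fm_def)

lemma realM_star:
  "real r (FImp A C) \<Longrightarrow> realM p A \<Longrightarrow> realM (App (App (starT (tyA Tm A) (tyA Tm C)) r) p) C"
  using rel unfolding monadic_real_def by (elim conjE) blast

lemma realM_merge:
  assumes "realM p A" "realM q C"
  shows "realM (App (App (mergeT (tyA Tm A) (tyA Tm C)) p) q) (FAnd A C)"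
proof -
  have "\<forall>p q A C. realM p A \<longrightarrow> realM q C \<longrightarrow>
          realM (App (App (mergeT (tyA Tm A) (tyA Tm C)) p) q) (FAnd A C)"
    using rel unfolding monadic_real_def by (elim conjE) assumption
  then show ?thesis using assms by blast
qed

lemma list_all2_real_typing:
  "list_all2 real ps As \<Longrightarrow> list_all2 (typing ctyp []) ps (map (tyA Tm) As)"
  by (auto simp: list_all2_map2 real_typing elim: list_all2_mono)

lemma typing_apps_starK:
  assumes "typing ctyp [] r (arrows (map (tyA Tm) As) (Tm Y))" and "list_all2 realM qs As"
  shows "typing ctyp [] (apps (starK Tm starT mergeT (map (tyA Tm) As) Y) (r # qs)) (Tm Y)"
proof (rule typing_apps)
  show "typing ctyp [] (starK Tm starT mergeT (map (tyA Tm) As) Y)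
          (arrows (arrows (map (tyA Tm) As) (Tm Y) # map Tm (map (tyA Tm) As)) (Tm Y))"
    using typing_starK[OF monad, of "map (tyA Tm) As" Y] by simp
  show "list_all2 (typing ctyp []) (r # qs) (arrows (map (tyA Tm) As) (Tm Y) # map Tm (map (tyA Tm) As))"
    using assms by (auto simp: list_all2_map2 realM_typing elim: list_all2_mono)
qed

lemma realM_apps_uncurry_pair:
  assumes r: "typing ctyp [] r (arrows (map (tyA Tm) (A1 # A2 # As)) (Tm (tyA Tm B)))"
    and r_real: "\<And>ps. list_all2 real ps (A1 # A2 # As) \<Longrightarrow> realM (apps r ps) B"
    and ps: "list_all2 real ps (FAnd A1 A2 # As)"
  shows "realM (apps (uncurry_pair (tyA Tm A1) (tyA Tm A2) r) ps) B"
proof -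
  obtain p ps' where ps_eq: "ps = p # ps'" and p: "real p (FAnd A1 A2)" and ps': "list_all2 real ps' As"
    using ps by (cases ps) auto
  have "realM (apps r (Fst p # Snd p # ps')) B"
    using r_real[of "Fst p # Snd p # ps'"] real_FAndD[OF p] ps' by simp
  moreover have "reds delta (apps (uncurry_pair (tyA Tm A1) (tyA Tm A2) r) ps)
                   (apps r (Fst p # Snd p # ps'))"
    using red_apps[OF red_uncurry_pair[OF r]] ps_eq unfolding reds_def by auto
  moreover have "typing ctyp [] (uncurry_pair (tyA Tm A1) (tyA Tm A2) r)
      (arrows (map (tyA Tm) (FAnd A1 A2 # As)) (Tm (tyA Tm B)))"
    using typing_uncurry_pair r by simp
  then have "typing ctyp [] (apps (uncurry_pair (tyA Tm A1) (tyA Tm A2) r) ps) (Tm (tyA Tm B))"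
    using typing_apps list_all2_real_typing[OF ps] by blast
  ultimately show ?thesis by (rule realM_reds_backward)
qed

lemma realM_starK:
  assumes B: "closed_fm B"
    and "typing ctyp [] r (arrows (map (tyA Tm) As) (Tm (tyA Tm B)))"
    and "\<And>ps. list_all2 real ps As \<Longrightarrow> realM (apps r ps) B"
    and "list_all2 realM qs As"
  shows "realM (apps (starK Tm starT mergeT (map (tyA Tm) As) (tyA Tm B)) (r # qs)) B"
  using assms(2-)
proof (induction "length As" arbitrary: As r qs rule: less_induct)
  case less
  note r = less.prems(1) and r_real = less.prems(2) and qs = less.prems(3)
  have lhs_typing: "typing ctyp [] (apps (starK Tm starT mergeT (map (tyA Tm) As) (tyA Tm B)) (r # qs))
               (Tm (tyA Tm B))"
    using typing_apps_starK[OF r qs] .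
  consider "As = []" | A where "As = [A]" | A1 A2 As' where "As = A1 # A2 # As'"
    by (metis list.exhaust)
  then show ?case
  proof cases
    case 1
    with qs r_real have "realM r B" "qs = []" by auto
    moreover have "red delta (apps (App (Lam (Tm (tyA Tm B)) (Var 0)) r) []) (apps r [])"
      by (rule red_apps_beta) simp
    ultimately show ?thesis
      using 1 lhs_typing by (auto intro: realM_reds_backward simp: reds_def)
  next
    case (2 A)
    then obtain q where q: "qs = [q]" "realM q A"
      using qs by (auto simp: list_all2_Cons2)
    have "real r (FImp A B)"
    proof (rule real_FImpI[OF realM_closed_fm[OF q(2)] B])
      show "typing ctyp [] r (TArr (tyA Tm A) (Tm (tyA Tm B)))" using r 2 by simp
      show "realM (App r p) B" if "real p A" for p using r_real[of "[p]"] that 2 by simp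
    qed
    from realM_star[OF this q(2)] show ?thesis using 2 q by simp
  next
    case (3 A1 A2 As')
    then obtain q1 q2 qs' where q: "qs = q1 # q2 # qs'" "realM q1 A1" "realM q2 A2"
      "list_all2 realM qs' As'"
      using qs by (auto simp: list_all2_Cons2)
    let ?X1 = "tyA Tm A1" and ?X2 = "tyA Tm A2"
    let ?As = "FAnd A1 A2 # As'" and ?r = "uncurry_pair ?X1 ?X2 r"
      and ?m = "App (App (mergeT ?X1 ?X2) q1) q2"
    have "realM (apps (starK Tm starT mergeT (map (tyA Tm) ?As) (tyA Tm B)) (?r # ?m # qs')) B"
    proof (rule less.hyps)
      show "length ?As < length As" using 3 by simp
      show "typing ctyp [] ?r (arrows (map (tyA Tm) ?As) (Tm (tyA Tm B)))"
        using typing_uncurry_pair r 3 by auto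
      show "realM (apps ?r ps) B" if "list_all2 real ps ?As" for ps
        using realM_apps_uncurry_pair r r_real that 3 by blast
      show "list_all2 realM (?m # qs') ?As"
        using realM_merge q by simp
    qed
    moreover have "reds delta
        (apps (starK Tm starT mergeT (?X1 # ?X2 # map (tyA Tm) As') (tyA Tm B)) (r # q1 # q2 # qs'))
        (apps (starK Tm starT mergeT (TProd ?X1 ?X2 # map (tyA Tm) As') (tyA Tm B)) (?r # ?m # qs'))"
      by (rule reds_starK_Cons_Cons[OF r realM_typing[OF q(2)] realM_typing[OF q(3)]
            typing_mergeT typing_starK[OF monad]])
    then have "reds delta (apps (starK Tm starT mergeT (map (tyA Tm) As) (tyA Tm B)) (r # qs))
        (apps (starK Tm starT mergeT (map (tyA Tm) ?As) (tyA Tm B)) (?r # ?m # qs'))"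
      using 3 q by simp
    ultimately show ?thesis using lhs_typing by (rule realM_reds_backward)
  qed
qed

end

theorem mainTheorem2:
  fixes ctyp :: "'c \<Rightarrow> ty" and delta :: "'c trm \<Rightarrow> 'c trm \<Rightarrow> bool"
    and interp :: "'p \<Rightarrow> nat list \<Rightarrow> bool" and Tm :: "ty \<Rightarrow> ty"
    and unitT :: "ty \<Rightarrow> 'c trm" and starT mergeT :: "ty \<Rightarrow> ty \<Rightarrow> 'c trm"
    and realM real :: "'c trm \<Rightarrow> 'p fm \<Rightarrow> bool"
    and As :: "'p fm list" and B :: "'p fm" and r :: "'c trm"
  assumes monad: "syn_monad ctyp delta Tm unitT starT mergeT"
    and rel: "monadic_real ctyp delta interp Tm unitT starT mergeT realM real"
    and closedA: "\<forall>A\<in>set As. closed_fm A"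
    and closedB: "closed_fm B"
    and r_typ: "typing ctyp [] r (arrows (map (tyA Tm) As) (Tm (tyA Tm B)))"
    and r_real: "\<forall>ps. length ps = length As \<longrightarrow>
                   (\<forall>i<length As. typing ctyp [] (ps ! i) (tyA Tm (As ! i)) \<and> real (ps ! i) (As ! i))
                   \<longrightarrow> realM (apps r ps) B"
  shows "\<forall>qs. length qs = length As \<longrightarrow>
           (\<forall>i<length As. typing ctyp [] (qs ! i) (Tm (tyA Tm (As ! i))) \<and> realM (qs ! i) (As ! i))
           \<longrightarrow> realM (apps (starK Tm starT mergeT (map (tyA Tm) As) (tyA Tm B)) (r # qs)) B"
proof (intro allI impI)
  interpret monadic_realizability ctyp delta interp Tm unitT starT mergeT realM real
    using monad rel by unfold_locales
  fix qs :: "'c trm list"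
  assume "length qs = length As"
    and "\<forall>i<length As. typing ctyp [] (qs ! i) (Tm (tyA Tm (As ! i))) \<and> realM (qs ! i) (As ! i)"
  then have "list_all2 realM qs As" by (simp add: list_all2_conv_all_nth)
  moreover have "realM (apps r ps) B" if "list_all2 real ps As" for ps
    using r_real that real_typing by (auto simp: list_all2_conv_all_nth)
  ultimately show "realM (apps (starK Tm starT mergeT (map (tyA Tm) As) (tyA Tm B)) (r # qs)) B"
    using realM_starK[OF closedB r_typ] by blast
qed

end
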